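(* For every $p\in(0,1)$ and $q\in[p,1]$, \[\mathrm{aa}_p^q(2)\ge\Big(\frac{2\cdot2^{p/q}}{2^p\big(2-(2-2^p)^{q/p}\big)^{p/q}+2(2-2^p)}\Big)^{1/p}.\] In particular, $\mathrm{aa}_p(2)\ge\frac{4}{4+2^p(2^p-2)}$, and if $p\in(0,1)$ satisfies \[\frac{2^{p+1}}{4+2^p\big((2-(2-2^p)^{1/p})^p-2\big)}>1,\] then $\mathrm{aa}_p^1(2)>1$ (which is the case, e.g., for $p=2/3$).
   Context: For $r\in(0,1]$, an $r$-metric space is a set with $d$ such that $d^r$ is a metric; pointed means a distinguished point $0$. A $p$-Banach space is a complete vector space with a $p$-norm. For a pointed $p$-metric space $\mathcal M$, $\delta(x)$ is evaluation at $x$ on real functions vanishing at $0$, and $\mathcal F_p(\mathcal M)$ is the completion of $\mathrm{span}\{\delta(x)\}$ under $\|\sum a_i\delta(x_i)\|=\sup\|\sum a_if(x_i)\|_Y$ over $p$-Banach $Y$ and $1$-Lipschitz $f:\mathcal M\to Y$ with $f(0)=0$. For $0\in\mathcal N\subset\mathcal M$, $L_j$ is the linear map $\delta_{\mathcal N}(x)\mapsto\delta_{\mathcal M}(x)$ and $\mathrm{amen}_p(\mathcal N,\mathcal M)=\|L_j^{-1}\|$ if $L_j$ is an isomorphism onto its range ($+\infty$ otherwise). $\mathrm{aa}_p^q(n)=\sup\{\mathrm{amen}_p(\mathcal N,\mathcal M'):\mathcal N$ a pointed $q$-metric space with $|\mathcal N\setminus\{0\}|\le n$, $\mathcal M'\supset\mathcal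 N$ any $q$-metric space$\}$, and $\mathrm{aa}_p(n)=\mathrm{aa}_p^p(n)$. *)

theory Defs
  imports Complex_Main "HOL-Library.Extended_Real" "HOL-Library.Infinite_Typeclass"
begin

definition rmetric :: "real \<Rightarrow> 'a set \<Rightarrow> ('a \<Rightarrow> 'a \<Rightarrow> real) \<Rightarrow> bool" where
  "rmetric r M d \<longleftrightarrow>
     (\<forall>x\<in>M. \<forall>y\<in>M. 0 \<le> d x y \<and> (d x y = 0 \<longleftrightarrow> x = y) \<and> d x y = d y x) \<and>
     (\<forall>x\<in>M. \<forall>y\<in>M. \<forall>w\<in>M. d x w powr r \<le> d x y powr r + d y w powr r)"

definition pointed_rmetric :: "real \<Rightarrow> 'a set \<Rightarrow> ('a \<Rightarrow> 'a \<Rightarrow> real) \<Rightarrow> 'a \<Rightarrow> bool" where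
  "pointed_rmetric r M d z \<longleftrightarrow> rmetric r M d \<and> z \<in> M"

text \<open>span{delta(x) : x in M}: finitely supported real functions on M - {z}
  (mu represents sum_x mu x * delta(x)); delta(z) = 0.\<close>
definition molecules :: "'a set \<Rightarrow> 'a \<Rightarrow> ('a \<Rightarrow> real) set" where
  "molecules M z = {\<mu>. finite {x. \<mu> x \<noteq> 0} \<and> {x. \<mu> x \<noteq> 0} \<subseteq> M - {z}}"

definition dirac :: "'a \<Rightarrow> 'a \<Rightarrow> ('a \<Rightarrow> real)" where
  "dirac z x = (\<lambda>y. if y = x \<and> x \<noteq> z then 1 else 0)"

definition p_seminorm_on :: "real \<Rightarrow> ('a \<Rightarrow> real) set \<Rightarrow> (('a \<Rightarrow> real) \<Rightarrow> real) \<Rightarrow> bool" where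
  "p_seminorm_on p V N \<longleftrightarrow>
     (\<forall>\<mu>\<in>V. 0 \<le> N \<mu>) \<and>
     (\<forall>c. \<forall>\<mu>\<in>V. N (\<lambda>y. c * \<mu> y) = \<bar>c\<bar> * N \<mu>) \<and>
     (\<forall>\<mu>\<in>V. \<forall>\<nu>\<in>V. N (\<lambda>y. \<mu> y + \<nu> y) powr p \<le> N \<mu> powr p + N \<nu> powr p)"

text \<open>A p-seminorm on the span of the deltas with ||delta x - delta y|| \<le> d x y
  is exactly mu \<mapsto> ||sum mu(x) f(x)||_Y for some p-Banach space Y and 1-Lipschitz
  f with f(z) = 0 (up to quotient and completion).\<close>
definition admissible :: "real \<Rightarrow> 'a set \<Rightarrow> ('a \<Rightarrow> 'a \<Rightarrow> real) \<Rightarrow> 'a \<Rightarrow> (('a \<Rightarrow> real) \<Rightarrow> real) \<Rightarrow> bool" where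
  "admissible p M d z N \<longleftrightarrow>
     p_seminorm_on p (molecules M z) N \<and>
     (\<forall>x\<in>M. \<forall>y\<in>M. N (\<lambda>w. dirac z x w - dirac z y w) \<le> d x y)"

definition Fp_norm :: "real \<Rightarrow> 'a set \<Rightarrow> ('a \<Rightarrow> 'a \<Rightarrow> real) \<Rightarrow> 'a \<Rightarrow> ('a \<Rightarrow> real) \<Rightarrow> real" where
  "Fp_norm p M d z \<mu> = Sup {N \<mu> | N. admissible p M d z N}"

text \<open>amen_p(N,M) = ||L_j^{-1}|| if L_j is an isomorphism onto its range, +\<infinity> otherwise.
  (By density, L_j is an isomorphism onto its range iff it is bounded below on span{delta}.)\<close>
definition amen :: "real \<Rightarrow> 'a set \<Rightarrow> 'a set \<Rightarrow> ('a \<Rightarrow> 'a \<Rightarrow> real) \<Rightarrow> 'a \<Rightarrow> ereal" where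
  "amen p N M d z =
     (if \<exists>C. \<forall>\<mu>\<in>molecules N z. Fp_norm p N d z \<mu> \<le> C * Fp_norm p M d z \<mu>
      then Sup ({0} \<union> {ereal (Fp_norm p N d z \<mu> / Fp_norm p M d z \<mu>) | \<mu>.
                         \<mu> \<in> molecules N z \<and> (\<exists>x. \<mu> x \<noteq> 0)})
      else \<infinity>)"

text \<open>aa_p^q(n), with all spaces taken inside the (infinite) type 'a.\<close>
definition aa :: "'a itself \<Rightarrow> real \<Rightarrow> real \<Rightarrow> nat \<Rightarrow> ereal" where
  "aa _ p q n = Sup {amen p N M d z | (N :: 'a set) M d z.
      pointed_rmetric q N d z \<and> finite (N - {z}) \<and> card (N - {z}) \<le> n \<and>
      rmetric q M d \<and> N \<subseteq> M}"

end

theory Submission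
  imports Defs "HOL-Analysis.Convex"
begin

(* Let N = {z, x, y} with base point z, where x and y lie at q-distance 2 from z and 2E from
   each other, and let M add a point w at q-distance E from x and y and 2 - E from z.  In F_p(M),
   \<delta>x + \<delta>y = (\<delta>x - \<delta>w) + (\<delta>y - \<delta>w) + 2 (\<delta>w - \<delta>z) has p-th power of norm at most
   2 E^(p/q) + 2^p (2 - E)^(p/q).  In F_p(N) its norm is bounded below by the quotient p-norm that
   charges d^p for each edge of the triangle zxy; by the inequality
   |1 - c|^p + |1 + c|^p + (2 - 2^p) |c|^p >= 2, this norm of \<delta>x + \<delta>y is at least
   (2 * 2^(p/q))^(1/p) whenever E^(p/q) >= 2 - 2^p.  Taking E^(p/q) = 2 - 2^p and dividing the
   two bounds gives the estimate for amen_p(N, M). *)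

section \<open>Powers with exponent at most one\<close>

lemma powr_add_le_add_powr:
  fixes u v p :: real
  assumes p: "0 < p" "p \<le> 1" and uv: "0 \<le> u" "0 \<le> v"
  shows "(u + v) powr p \<le> u powr p + v powr p"
proof (cases "u + v = 0")
  case True
  then show ?thesis using uv by simp
next
  case False
  define s where "s = u + v"
  have s: "0 < s" using False uv s_def by simp
  have "u / s \<le> (u / s) powr p" "v / s \<le> (v / s) powr p"
    using powr_mono'[of p 1 "u / s"] powr_mono'[of p 1 "v / s"] p uv s s_def
    by (simp_all add: divide_le_eq_1)
  then have "u / s + v / s \<le> u powr p / s powr p + v powr p / s powr p"
    using s uv by (simp add: powr_divide)
  moreover have "u / s + v / s = 1"
    using s s_def by (simp add: add_divide_distrib[symmetric])
  ultimately show ?thesis using s s_def by (simp add: add_divide_distrib[symmetric] le_divide_eq)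
qed

lemma abs_add_powr_le:
  fixes u v p :: real
  assumes "0 < p" "p \<le> 1"
  shows "\<bar>u + v\<bar> powr p \<le> \<bar>u\<bar> powr p + \<bar>v\<bar> powr p"
proof -
  have "\<bar>u + v\<bar> powr p \<le> (\<bar>u\<bar> + \<bar>v\<bar>) powr p"
    using assms by (intro powr_mono2) auto
  also have "\<dots> \<le> \<bar>u\<bar> powr p + \<bar>v\<bar> powr p"
    using assms by (intro powr_add_le_add_powr) auto
  finally show ?thesis .
qed

lemma powr_le_imp_le_powr_inverse:
  fixes x K p :: real
  assumes "0 < p" "0 \<le> x" "x powr p \<le> K"
  shows "x \<le> K powr (1 / p)"
proof -
  have "x = (x powr p) powr (1 / p)" using assms by (simp add: powr_powr)
  also have "\<dots> \<le> K powr (1 / p)" using assms by (intro powr_mono2) auto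
  finally show ?thesis .
qed

lemma chord_le_one_add_powr:
  fixes p t :: real
  assumes p: "0 < p" "p \<le> 1" and t: "0 \<le> t" "t \<le> 1"
  shows "1 + (2 powr p - 1) * t \<le> (1 + t) powr p"
proof -
  have "convex_on {0<..} (\<lambda>x. x powr (1 / p))"
    using p by (intro powr_convex) simp
  then have "((1 - t) *\<^sub>R 1 + t *\<^sub>R 2 powr p) powr (1 / p)
      \<le> (1 - t) * 1 powr (1 / p) + t * (2 powr p) powr (1 / p)"
    using t by (intro convex_onD) auto
  then have "(1 + (2 powr p - 1) * t) powr (1 / p) \<le> 1 + t"
    using p by (simp add: powr_powr algebra_simps)
  moreover have "0 \<le> 1 + (2 powr p - 1) * t"
    using t p by (simp add: ge_one_powr_ge_zero)
  ultimately have "((1 + (2 powr p - 1) * t) powr (1 / p)) powr p \<le> (1 + t) powr p"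
    using p by (intro powr_mono2) auto
  then show ?thesis
    using \<open>0 \<le> 1 + (2 powr p - 1) * t\<close> p by (simp add: powr_powr)
qed

lemma two_le_abs_powr_sum:
  fixes p c :: real
  assumes p: "0 < p" "p \<le> 1"
  shows "2 \<le> \<bar>1 - c\<bar> powr p + \<bar>1 + c\<bar> powr p + (2 - 2 powr p) * \<bar>c\<bar> powr p"
proof -
  have two_powr: "1 \<le> 2 powr p" "2 powr p \<le> 2"
    using p powr_mono[of p 1 "2::real"] by (simp_all add: ge_one_powr_ge_zero)
  have nonneg_case: "2 \<le> \<bar>1 - u\<bar> powr p + (1 + u) powr p + (2 - 2 powr p) * u powr p"
    if u: "0 \<le> u" for u :: real
  proof (cases "u \<le> 1")
    case True
    have "1 - u \<le> \<bar>1 - u\<bar> powr p" "u \<le> u powr p"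
      using powr_mono'[of p 1 "1 - u"] powr_mono'[of p 1 u] p u True by simp_all
    then have "(2 - 2 powr p) * u \<le> (2 - 2 powr p) * u powr p" "1 - u \<le> \<bar>1 - u\<bar> powr p"
      using two_powr by (auto intro: mult_left_mono)
    then show ?thesis
      using chord_le_one_add_powr[OF p u True] by (simp add: algebra_simps)
  next
    case False
    have "2 powr p \<le> (1 + u) powr p" "1 \<le> u powr p"
      using False p by (auto intro: powr_mono2 ge_one_powr_ge_zero)
    then have "2 - 2 powr p \<le> (2 - 2 powr p) * u powr p" "2 powr p \<le> (1 + u) powr p"
      using two_powr mult_left_mono[of 1 "u powr p" "2 - 2 powr p"] by auto
    then show ?thesis
      using powr_ge_zero[of "\<bar>1 - u\<bar>" p] by linarith
  qed
  show ?thesis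
  proof (cases "0 \<le> c")
    case True
    then show ?thesis using nonneg_case[of c] by simp
  next
    case False
    then show ?thesis using nonneg_case[of "- c"] by (simp add: add.commute)
  qed
qed

section \<open>A quotient p-norm on three points\<close>

text \<open>Since \<open>a \<delta>x + b \<delta>y = (a - c) \<delta>x + (b + c) \<delta>y + c (\<delta>x - \<delta>y)\<close>, this is the cost of
  representing \<open>a \<delta>x + b \<delta>y\<close> along the edges zx, zy, xy of a triangle whose edges have
  p-th powers of length \<open>\<alpha>\<close>, \<open>\<beta>\<close>, \<open>\<gamma>\<close>.\<close>

definition three_point_cost :: "real \<Rightarrow> real \<Rightarrow> real \<Rightarrow> real \<Rightarrow> real \<Rightarrow> real \<Rightarrow> real \<Rightarrow> real" where
  "three_point_cost p \<alpha> \<beta> \<gamma> a b c = \<alpha> * \<bar>a - c\<bar> powr p + \<beta> * \<bar>b + c\<bar> powr p + \<gamma> * \<bar>c\<bar> powr p"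

definition three_point_inf_cost :: "real \<Rightarrow> real \<Rightarrow> real \<Rightarrow> real \<Rightarrow> real \<Rightarrow> real \<Rightarrow> real" where
  "three_point_inf_cost p \<alpha> \<beta> \<gamma> a b = (INF c. three_point_cost p \<alpha> \<beta> \<gamma> a b c)"

definition three_point_norm :: "real \<Rightarrow> real \<Rightarrow> real \<Rightarrow> real \<Rightarrow> 'a \<Rightarrow> 'a \<Rightarrow> ('a \<Rightarrow> real) \<Rightarrow> real" where
  "three_point_norm p \<alpha> \<beta> \<gamma> x y \<mu> = three_point_inf_cost p \<alpha> \<beta> \<gamma> (\<mu> x) (\<mu> y) powr (1 / p)"

context
  fixes p \<alpha> \<beta> \<gamma> :: real
  assumes p: "0 < p" and weights: "0 \<le> \<alpha>" "0 \<le> \<beta>" "0 \<le> \<gamma>"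
begin

lemma three_point_cost_nonneg: "0 \<le> three_point_cost p \<alpha> \<beta> \<gamma> a b c"
  using weights by (simp add: three_point_cost_def)

lemma three_point_inf_cost_le: "three_point_inf_cost p \<alpha> \<beta> \<gamma> a b \<le> three_point_cost p \<alpha> \<beta> \<gamma> a b c"
  unfolding three_point_inf_cost_def
  by (rule cINF_lower) (auto intro: bdd_belowI2 three_point_cost_nonneg)

lemma three_point_inf_cost_greatest:
  "(\<And>c. K \<le> three_point_cost p \<alpha> \<beta> \<gamma> a b c) \<Longrightarrow> K \<le> three_point_inf_cost p \<alpha> \<beta> \<gamma> a b"
  unfolding three_point_inf_cost_def by (rule cINF_greatest) auto

lemma three_point_inf_cost_nonneg: "0 \<le> three_point_inf_cost p \<alpha> \<beta> \<gamma> a b"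
  by (intro three_point_inf_cost_greatest three_point_cost_nonneg)

lemma three_point_cost_scale:
  "three_point_cost p \<alpha> \<beta> \<gamma> (k * a) (k * b) (k * c) = \<bar>k\<bar> powr p * three_point_cost p \<alpha> \<beta> \<gamma> a b c"
proof -
  have "\<bar>k * a - k * c\<bar> = \<bar>k\<bar> * \<bar>a - c\<bar>" "\<bar>k * b + k * c\<bar> = \<bar>k\<bar> * \<bar>b + c\<bar>"
    by (simp_all add: abs_mult[symmetric] algebra_simps)
  then show ?thesis
    by (simp add: three_point_cost_def abs_mult powr_mult algebra_simps)
qed

lemma three_point_inf_cost_scale_le:
  "three_point_inf_cost p \<alpha> \<beta> \<gamma> (k * a) (k * b) \<le> \<bar>k\<bar> powr p * three_point_inf_cost p \<alpha> \<beta> \<gamma> a b"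
proof (cases "k = 0")
  case True
  then show ?thesis
    using three_point_inf_cost_le[of 0 0 0] p by (simp add: three_point_cost_def)
next
  case False
  then have k: "0 < \<bar>k\<bar> powr p" by simp
  have "three_point_inf_cost p \<alpha> \<beta> \<gamma> (k * a) (k * b) / \<bar>k\<bar> powr p
      \<le> three_point_inf_cost p \<alpha> \<beta> \<gamma> a b"
  proof (rule three_point_inf_cost_greatest)
    fix c
    have "three_point_inf_cost p \<alpha> \<beta> \<gamma> (k * a) (k * b) \<le> three_point_cost p \<alpha> \<beta> \<gamma> (k * a) (k * b) (k * c)"
      by (rule three_point_inf_cost_le)
    also have "\<dots> = \<bar>k\<bar> powr p * three_point_cost p \<alpha> \<beta> \<gamma> a b c"
      by (rule three_point_cost_scale)
    finally show "three_point_inf_cost p \<alpha> \<beta> \<gamma> (k * a) (k * b) / \<bar>k\<bar> powr p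
        \<le> three_point_cost p \<alpha> \<beta> \<gamma> a b c"
      using k by (simp add: divide_le_eq mult.commute)
  qed
  then show ?thesis using k by (simp add: divide_le_eq mult.commute)
qed

lemma three_point_inf_cost_scale:
  "three_point_inf_cost p \<alpha> \<beta> \<gamma> (k * a) (k * b) = \<bar>k\<bar> powr p * three_point_inf_cost p \<alpha> \<beta> \<gamma> a b"
proof (cases "k = 0")
  case True
  then show ?thesis
    using three_point_inf_cost_scale_le[of 0 a b] three_point_inf_cost_nonneg[of 0 0] by simp
next
  case False
  have "\<bar>k\<bar> powr p * three_point_inf_cost p \<alpha> \<beta> \<gamma> a b
      = \<bar>k\<bar> powr p * three_point_inf_cost p \<alpha> \<beta> \<gamma> (inverse k * (k * a)) (inverse k * (k * b))"
    using False by (simp add: mult.assoc[symmetric])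
  also have "\<dots> \<le> \<bar>k\<bar> powr p * (\<bar>inverse k\<bar> powr p * three_point_inf_cost p \<alpha> \<beta> \<gamma> (k * a) (k * b))"
    by (intro mult_left_mono three_point_inf_cost_scale_le) simp
  also have "\<dots> = three_point_inf_cost p \<alpha> \<beta> \<gamma> (k * a) (k * b)"
    using False by (simp add: powr_mult[symmetric] abs_mult[symmetric])
  finally show ?thesis
    using three_point_inf_cost_scale_le[of k a b] by simp
qed

context
  assumes p_le_1: "p \<le> 1"
begin

lemma three_point_cost_add_le:
  "three_point_cost p \<alpha> \<beta> \<gamma> (a1 + a2) (b1 + b2) (c1 + c2)
     \<le> three_point_cost p \<alpha> \<beta> \<gamma> a1 b1 c1 + three_point_cost p \<alpha> \<beta> \<gamma> a2 b2 c2"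
proof -
  have weighted: "w * \<bar>u + v\<bar> powr p \<le> w * \<bar>u\<bar> powr p + w * \<bar>v\<bar> powr p" if "0 \<le> w" for w u v
    using mult_left_mono[OF abs_add_powr_le[OF p p_le_1, of u v] that] by (simp add: distrib_left)
  have regroup: "a1 + a2 - (c1 + c2) = (a1 - c1) + (a2 - c2)" "b1 + b2 + (c1 + c2) = (b1 + c1) + (b2 + c2)"
    by simp_all
  show ?thesis
    using weighted[OF weights(1), of "a1 - c1" "a2 - c2"] weighted[OF weights(2), of "b1 + c1" "b2 + c2"]
      weighted[OF weights(3), of c1 c2]
    unfolding three_point_cost_def regroup by linarith
qed

lemma three_point_inf_cost_add_le:
  "three_point_inf_cost p \<alpha> \<beta> \<gamma> (a1 + a2) (b1 + b2)
     \<le> three_point_inf_cost p \<alpha> \<beta> \<gamma> a1 b1 + three_point_inf_cost p \<alpha> \<beta> \<gamma> a2 b2"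
proof -
  have "three_point_inf_cost p \<alpha> \<beta> \<gamma> (a1 + a2) (b1 + b2) - three_point_inf_cost p \<alpha> \<beta> \<gamma> a1 b1
      \<le> three_point_cost p \<alpha> \<beta> \<gamma> a2 b2 c2" for c2
  proof -
    have "three_point_inf_cost p \<alpha> \<beta> \<gamma> (a1 + a2) (b1 + b2) - three_point_cost p \<alpha> \<beta> \<gamma> a2 b2 c2
        \<le> three_point_inf_cost p \<alpha> \<beta> \<gamma> a1 b1"
    proof (rule three_point_inf_cost_greatest)
      fix c1
      have "three_point_inf_cost p \<alpha> \<beta> \<gamma> (a1 + a2) (b1 + b2)
          \<le> three_point_cost p \<alpha> \<beta> \<gamma> (a1 + a2) (b1 + b2) (c1 + c2)"
        by (rule three_point_inf_cost_le)
      also have "\<dots> \<le> three_point_cost p \<alpha> \<beta> \<gamma> a1 b1 c1 + three_point_cost p \<alpha> \<beta> \<gamma> a2 b2 c2"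
        by (rule three_point_cost_add_le)
      finally show "three_point_inf_cost p \<alpha> \<beta> \<gamma> (a1 + a2) (b1 + b2) - three_point_cost p \<alpha> \<beta> \<gamma> a2 b2 c2
          \<le> three_point_cost p \<alpha> \<beta> \<gamma> a1 b1 c1"
        by simp
    qed
    then show ?thesis by simp
  qed
  then have "three_point_inf_cost p \<alpha> \<beta> \<gamma> (a1 + a2) (b1 + b2) - three_point_inf_cost p \<alpha> \<beta> \<gamma> a1 b1
      \<le> three_point_inf_cost p \<alpha> \<beta> \<gamma> a2 b2"
    by (rule three_point_inf_cost_greatest)
  then show ?thesis by simp
qed

lemma three_point_norm_p_seminorm: "p_seminorm_on p V (three_point_norm p \<alpha> \<beta> \<gamma> x y)"
  unfolding p_seminorm_on_def
proof (intro conjI ballI allI)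
  fix \<mu> :: "'a \<Rightarrow> real"
  show "0 \<le> three_point_norm p \<alpha> \<beta> \<gamma> x y \<mu>"
    by (simp add: three_point_norm_def)
next
  fix c and \<mu> :: "'a \<Rightarrow> real"
  show "three_point_norm p \<alpha> \<beta> \<gamma> x y (\<lambda>v. c * \<mu> v) = \<bar>c\<bar> * three_point_norm p \<alpha> \<beta> \<gamma> x y \<mu>"
    using p three_point_inf_cost_nonneg
    by (simp add: three_point_norm_def three_point_inf_cost_scale powr_mult powr_powr)
next
  fix \<mu> \<nu> :: "'a \<Rightarrow> real"
  show "three_point_norm p \<alpha> \<beta> \<gamma> x y (\<lambda>v. \<mu> v + \<nu> v) powr p
      \<le> three_point_norm p \<alpha> \<beta> \<gamma> x y \<mu> powr p + three_point_norm p \<alpha> \<beta> \<gamma> x y \<nu> powr p"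
    using p three_point_inf_cost_nonneg three_point_inf_cost_add_le
    by (simp add: three_point_norm_def powr_powr)
qed

end

lemma three_point_norm_le:
  "three_point_norm p \<alpha> \<beta> \<gamma> x y \<mu> \<le> three_point_cost p \<alpha> \<beta> \<gamma> (\<mu> x) (\<mu> y) c powr (1 / p)"
  unfolding three_point_norm_def
  using p by (intro powr_mono2 three_point_inf_cost_le three_point_inf_cost_nonneg) auto

end

lemma admissible_three_point_norm:
  assumes p: "0 < p" "p \<le> 1" and distinct: "distinct [z, x, y]"
    and d: "\<And>a b. a \<in> {z, x, y} \<Longrightarrow> b \<in> {z, x, y} \<Longrightarrow> 0 \<le> d a b \<and> d a b = d b a"
  shows "admissible p {z, x, y} d z
           (three_point_norm p (d x z powr p) (d y z powr p) (d x y powr p) x y)"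
  unfolding admissible_def
proof (intro conjI ballI)
  show "p_seminorm_on p (molecules {z, x, y} z)
          (three_point_norm p (d x z powr p) (d y z powr p) (d x y powr p) x y)"
    using p by (intro three_point_norm_p_seminorm) auto
next
  fix a b assume ab: "a \<in> {z, x, y}" "b \<in> {z, x, y}"
  define \<mu> where "\<mu> = (\<lambda>v. dirac z a v - dirac z b v)"
  let ?cost = "three_point_cost p (d x z powr p) (d y z powr p) (d x y powr p) (\<mu> x) (\<mu> y)"
  have \<mu>: "\<mu> x = of_bool (a = x) - of_bool (b = x)" "\<mu> y = of_bool (a = y) - of_bool (b = y)"
    using distinct by (auto simp: \<mu>_def dirac_def)
  have "d z x = d x z" "d z y = d y z" "d y x = d x y"
    using d[of x z] d[of y z] d[of x y] by simp_all
  with ab distinct have "?cost c \<le> d a b powr p"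
    if "c = (if a = x \<and> b = y then 1 else if a = y \<and> b = x then -1 else 0)" for c
    using that by (auto simp: three_point_cost_def \<mu>)
  then obtain c where c: "?cost c \<le> d a b powr p" by blast
  have "three_point_norm p (d x z powr p) (d y z powr p) (d x y powr p) x y \<mu> \<le> ?cost c powr (1 / p)"
    using p by (intro three_point_norm_le) auto
  also have "\<dots> \<le> (d a b powr p) powr (1 / p)"
    using p c three_point_cost_nonneg[of p "d x z powr p" "d y z powr p" "d x y powr p"]
    by (intro powr_mono2) auto
  also have "\<dots> = d a b"
    using p d[OF ab] by (simp add: powr_powr)
  finally show "three_point_norm p (d x z powr p) (d y z powr p) (d x y powr p) x y
      (\<lambda>w. dirac z a w - dirac z b w) \<le> d a b"
    by (simp add: \<mu>_def)
qed

lemma three_point_norm_ge: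
  assumes p: "0 < p" "p \<le> 1" and \<alpha>: "0 \<le> \<alpha>" and \<gamma>: "(2 - 2 powr p) * \<alpha> \<le> \<gamma>"
    and \<mu>: "\<mu> x = 1" "\<mu> y = 1"
  shows "(2 * \<alpha>) powr (1 / p) \<le> three_point_norm p \<alpha> \<alpha> \<gamma> x y \<mu>"
proof -
  have "2 powr p \<le> 2" using powr_mono[of p 1 "2::real"] p by simp
  then have "0 \<le> (2 - 2 powr p) * \<alpha>" using \<alpha> by simp
  then have \<gamma>_nonneg: "0 \<le> \<gamma>" using \<gamma> by linarith
  have "2 * \<alpha> \<le> three_point_inf_cost p \<alpha> \<alpha> \<gamma> 1 1"
  proof (rule three_point_inf_cost_greatest[OF p(1) \<alpha> \<alpha> \<gamma>_nonneg])
    fix c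
    have "2 * \<alpha> \<le> \<alpha> * (\<bar>1 - c\<bar> powr p + \<bar>1 + c\<bar> powr p + (2 - 2 powr p) * \<bar>c\<bar> powr p)"
      using mult_left_mono[OF two_le_abs_powr_sum[OF p, of c] \<alpha>] by (simp add: mult.commute)
    also have "\<dots> \<le> three_point_cost p \<alpha> \<alpha> \<gamma> 1 1 c"
      using mult_right_mono[OF \<gamma>, of "\<bar>c\<bar> powr p"]
      by (simp add: three_point_cost_def algebra_simps)
    finally show "2 * \<alpha> \<le> three_point_cost p \<alpha> \<alpha> \<gamma> 1 1 c" .
  qed
  then show ?thesis
    using p \<alpha> \<mu> by (auto simp: three_point_norm_def intro: powr_mono2)
qed

section \<open>Upper bounds from edge decompositions\<close>

definition edge_combination :: "'a \<Rightarrow> (real \<times> 'a \<times> 'a) list \<Rightarrow> 'a \<Rightarrow> real" where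
  "edge_combination z es v = (\<Sum>(c, a, b)\<leftarrow>es. c * (dirac z a v - dirac z b v))"

lemma scaled_dirac_diff_in_molecules:
  assumes "a \<in> M" "b \<in> M"
  shows "(\<lambda>v. c * (dirac z a v - dirac z b v)) \<in> molecules M z"
proof -
  have "{v. c * (dirac z a v - dirac z b v) \<noteq> 0} \<subseteq> {a, b} - {z}"
    by (auto simp: dirac_def split: if_splits)
  then show ?thesis
    using assms unfolding molecules_def by (auto intro: finite_subset)
qed

lemma edge_combination_in_molecules:
  assumes "\<forall>(c, a, b)\<in>set es. a \<in> M \<and> b \<in> M"
  shows "edge_combination z es \<in> molecules M z"
proof -
  define S where "S = (\<Union>(c, a, b)\<in>set es. {a, b}) - {z}"
  have "edge_combination z es z = 0"
    by (induction es) (auto simp: edge_combination_def dirac_def)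
  moreover have "edge_combination z es v = 0" if "\<forall>(c, a, b)\<in>set es. v \<noteq> a \<and> v \<noteq> b" for v
    using that by (induction es) (auto simp: edge_combination_def dirac_def)
  ultimately have "{v. edge_combination z es v \<noteq> 0} \<subseteq> S"
    unfolding S_def by fastforce
  moreover have "finite S" "S \<subseteq> M - {z}"
    using assms by (auto simp: S_def)
  ultimately show ?thesis
    unfolding molecules_def by (auto intro: finite_subset)
qed

lemma admissible_nonneg: "admissible p M d z N \<Longrightarrow> \<mu> \<in> molecules M z \<Longrightarrow> 0 \<le> N \<mu>"
  unfolding admissible_def p_seminorm_on_def by blast

lemma admissible_scale:
  "admissible p M d z N \<Longrightarrow> \<mu> \<in> molecules M z \<Longrightarrow> N (\<lambda>v. c * \<mu> v) = \<bar>c\<bar> * N \<mu>"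
  unfolding admissible_def p_seminorm_on_def by blast

lemma admissible_add_powr_le:
  "admissible p M d z N \<Longrightarrow> \<mu> \<in> molecules M z \<Longrightarrow> \<nu> \<in> molecules M z \<Longrightarrow>
    N (\<lambda>v. \<mu> v + \<nu> v) powr p \<le> N \<mu> powr p + N \<nu> powr p"
  unfolding admissible_def p_seminorm_on_def by blast

lemma admissible_dirac_diff_le:
  "admissible p M d z N \<Longrightarrow> a \<in> M \<Longrightarrow> b \<in> M \<Longrightarrow> N (\<lambda>v. dirac z a v - dirac z b v) \<le> d a b"
  unfolding admissible_def by blast

lemma admissible_zero:
  assumes "\<forall>a\<in>M. \<forall>b\<in>M. 0 \<le> d a b"
  shows "admissible p M d z (\<lambda>_. 0)"
  using assms by (simp add: admissible_def p_seminorm_on_def)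

lemma admissible_edge_combination_powr_le:
  assumes p: "0 < p" and N: "admissible p M d z N"
    and es: "\<forall>(c, a, b)\<in>set es. a \<in> M \<and> b \<in> M"
  shows "N (edge_combination z es) powr p \<le> (\<Sum>(c, a, b)\<leftarrow>es. \<bar>c\<bar> powr p * d a b powr p)"
  using es
proof (induction es)
  case Nil
  have "(\<lambda>_. 0) \<in> molecules M z"
    by (simp add: molecules_def)
  then have "N (\<lambda>_. 0) = 0"
    using admissible_scale[OF N, of "\<lambda>_. 0" 0] by simp
  then show ?case by (simp add: edge_combination_def)
next
  case (Cons e es)
  obtain c a b where e: "e = (c, a, b)" by (cases e)
  with Cons.prems have ab: "a \<in> M" "b \<in> M" by auto
  define f where "f = (\<lambda>v. dirac z a v - dirac z b v)"
  have f: "f \<in> molecules M z" "(\<lambda>v. c * f v) \<in> molecules M z"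
    using scaled_dirac_diff_in_molecules[OF ab, of 1 z] scaled_dirac_diff_in_molecules[OF ab, of c z]
    by (simp_all add: f_def)
  have rest: "edge_combination z es \<in> molecules M z"
    using Cons.prems by (intro edge_combination_in_molecules) auto
  have Nf: "0 \<le> N f" "N f \<le> d a b" "N (\<lambda>v. c * f v) = \<bar>c\<bar> * N f"
    using admissible_nonneg[OF N f(1)] admissible_dirac_diff_le[OF N ab] admissible_scale[OF N f(1)]
    by (simp_all add: f_def)
  have "edge_combination z (e # es) = (\<lambda>v. c * f v + edge_combination z es v)"
    by (simp add: e f_def edge_combination_def fun_eq_iff)
  then have "N (edge_combination z (e # es)) powr p
      \<le> N (\<lambda>v. c * f v) powr p + N (edge_combination z es) powr p"
    using admissible_add_powr_le[OF N f(2) rest] by simp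
  also have "N (\<lambda>v. c * f v) powr p \<le> (\<bar>c\<bar> * d a b) powr p"
    unfolding Nf(3) using Nf(1,2) p by (intro powr_mono2 mult_left_mono) auto
  also have "\<dots> = \<bar>c\<bar> powr p * d a b powr p"
    using Nf by (simp add: powr_mult)
  finally show ?case
    using Cons by (simp add: e)
qed

lemma admissible_edge_combination_le:
  assumes p: "0 < p" and N: "admissible p M d z N"
    and es: "\<forall>(c, a, b)\<in>set es. a \<in> M \<and> b \<in> M"
  shows "N (edge_combination z es) \<le> (\<Sum>(c, a, b)\<leftarrow>es. \<bar>c\<bar> powr p * d a b powr p) powr (1 / p)"
  using admissible_nonneg[OF N edge_combination_in_molecules[OF es]]
  by (intro powr_le_imp_le_powr_inverse p admissible_edge_combination_powr_le[OF p N es])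

lemma Fp_norm_edge_combination_le:
  assumes p: "0 < p" and d: "\<forall>a\<in>M. \<forall>b\<in>M. 0 \<le> d a b"
    and es: "\<forall>(c, a, b)\<in>set es. a \<in> M \<and> b \<in> M"
  shows "Fp_norm p M d z (edge_combination z es)
           \<le> (\<Sum>(c, a, b)\<leftarrow>es. \<bar>c\<bar> powr p * d a b powr p) powr (1 / p)"
  unfolding Fp_norm_def
  using admissible_zero[OF d] admissible_edge_combination_le[OF p _ es]
  by (intro cSup_least) auto

lemma admissible_le_Fp_norm:
  assumes p: "0 < p" and N: "admissible p M d z N"
    and es: "\<forall>(c, a, b)\<in>set es. a \<in> M \<and> b \<in> M"
  shows "N (edge_combination z es) \<le> Fp_norm p M d z (edge_combination z es)"
  unfolding Fp_norm_def
  using N admissible_edge_combination_le[OF p _ es]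
  by (intro cSup_upper bdd_aboveI) auto

lemma ereal_divide_le_amen:
  assumes \<mu>: "\<mu> \<in> molecules N z" "\<mu> x \<noteq> 0"
    and a: "0 < a" "a \<le> Fp_norm p N d z \<mu>"
    and b: "0 \<le> Fp_norm p M d z \<mu>" "Fp_norm p M d z \<mu> \<le> b"
  shows "ereal (a / b) \<le> amen p N M d z"
proof (cases "\<exists>C. \<forall>\<nu>\<in>molecules N z. Fp_norm p N d z \<nu> \<le> C * Fp_norm p M d z \<nu>")
  case True
  then obtain C where "Fp_norm p N d z \<mu> \<le> C * Fp_norm p M d z \<mu>"
    using \<mu> by blast
  then have "0 < Fp_norm p M d z \<mu>"
    using a b by (cases "Fp_norm p M d z \<mu> = 0") auto
  then have "a / b \<le> Fp_norm p N d z \<mu> / Fp_norm p M d z \<mu>"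
    using a b by (intro frac_le) auto
  also have "ereal (Fp_norm p N d z \<mu> / Fp_norm p M d z \<mu>)
      \<le> Sup ({0} \<union> {ereal (Fp_norm p N d z \<nu> / Fp_norm p M d z \<nu>) | \<nu>.
                      \<nu> \<in> molecules N z \<and> (\<exists>x. \<nu> x \<noteq> 0)})"
    using \<mu> by (intro Sup_upper UnI2) blast
  finally show ?thesis
    using True by (simp add: amen_def)
next
  case False
  then show ?thesis unfolding amen_def by (subst if_not_P) auto
qed

section \<open>The kite extension\<close>

text \<open>The q-th powers of the distances; the last case is the pair {z, w}.  The triangles
  zxw and zyw are degenerate, which makes \<open>\<delta>x + \<delta>y\<close> cheap once w is available.\<close>

definition kite_power :: "real \<Rightarrow> 'a \<Rightarrow> 'a \<Rightarrow> 'a \<Rightarrow> 'a \<Rightarrow> 'a \<Rightarrow> 'a \<Rightarrow> real" where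
  "kite_power E z x y w u v =
     (if u = v then 0
      else if {u, v} = {z, x} \<or> {u, v} = {z, y} then 2
      else if {u, v} = {x, y} then 2 * E
      else if {u, v} = {x, w} \<or> {u, v} = {y, w} then E
      else 2 - E)"

definition kite_metric :: "real \<Rightarrow> real \<Rightarrow> 'a \<Rightarrow> 'a \<Rightarrow> 'a \<Rightarrow> 'a \<Rightarrow> 'a \<Rightarrow> 'a \<Rightarrow> real" where
  "kite_metric q E z x y w u v = kite_power E z x y w u v powr (1 / q)"

lemma kite_metric_rmetric:
  assumes q: "0 < q" and E: "0 < E" "E < 2" and distinct: "distinct [z, x, y, w]"
  shows "rmetric q {z, x, y, w} (kite_metric q E z x y w)"
proof -
  have nonneg: "0 \<le> kite_power E z x y w u v" for u v
    using E by (simp add: kite_power_def)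
  have "kite_metric q E z x y w u v powr q = kite_power E z x y w u v" for u v
    using q nonneg[of u v] by (simp add: kite_metric_def powr_powr)
  moreover have "kite_power E z x y w u v = 0 \<longleftrightarrow> u = v"
    "kite_power E z x y w u v = kite_power E z x y w v u" for u v
    using E by (auto simp: kite_power_def insert_commute)
  moreover have "kite_power E z x y w u v' \<le> kite_power E z x y w u v + kite_power E z x y w v v'"
    if "u \<in> {z, x, y, w}" "v \<in> {z, x, y, w}" "v' \<in> {z, x, y, w}" for u v v'
    using that distinct E by (auto simp: kite_power_def doubleton_eq_iff)
  ultimately show ?thesis
    using q nonneg unfolding rmetric_def by (simp add: kite_metric_def)
qed

lemma amen_kite_ge:
  fixes z x y w :: 'a
  assumes p: "0 < p" "p \<le> 1" and q: "0 < q"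
    and E: "0 < E" "E < 2" "2 - 2 powr p \<le> E powr (p / q)"
    and distinct: "distinct [z, x, y, w]"
  shows "ereal ((2 * 2 powr (p / q) / (2 * E powr (p / q) + 2 powr p * (2 - E) powr (p / q)))
                  powr (1 / p))
           \<le> amen p {z, x, y} {z, x, y, w} (kite_metric q E z x y w) z"
proof -
  define d where "d = kite_metric q E z x y w"
  have "rmetric q {z, x, y, w} d"
    unfolding d_def using q E(1,2) distinct by (rule kite_metric_rmetric)
  then have d_nonneg: "\<forall>a\<in>{z, x, y, w}. \<forall>b\<in>{z, x, y, w}. 0 \<le> d a b"
    and d_sym: "\<And>a b. a \<in> {z, x, y} \<Longrightarrow> b \<in> {z, x, y} \<Longrightarrow> 0 \<le> d a b \<and> d a b = d b a"
    unfolding rmetric_def by blast+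
  have d: "d x z = 2 powr (1 / q)" "d y z = 2 powr (1 / q)" "d x y = (2 * E) powr (1 / q)"
    "d x w = E powr (1 / q)" "d y w = E powr (1 / q)" "d w z = (2 - E) powr (1 / q)"
    using distinct by (auto simp: d_def kite_metric_def kite_power_def doubleton_eq_iff)
  define \<alpha> where "\<alpha> = 2 powr (p / q)"
  define \<mu> where "\<mu> = edge_combination z [(1, x, z), (1, y, z)]"
  have \<mu>_via_w: "\<mu> = edge_combination z [(1, x, w), (1, y, w), (2, w, z)]"
    using distinct by (auto simp: \<mu>_def edge_combination_def dirac_def fun_eq_iff)
  have \<mu>_mol: "\<mu> \<in> molecules {z, x, y} z"
    unfolding \<mu>_def by (rule edge_combination_in_molecules) simp
  have \<mu>_xy: "\<mu> x = 1" "\<mu> y = 1"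
    using distinct by (auto simp: \<mu>_def edge_combination_def dirac_def)
  have weights: "d x z powr p = \<alpha>" "d y z powr p = \<alpha>" "(2 - 2 powr p) * \<alpha> \<le> d x y powr p"
    using E p q mult_right_mono[OF E(3), of \<alpha>]
    by (simp_all add: d \<alpha>_def powr_powr powr_mult mult.commute)
  have "admissible p {z, x, y} d z
      (three_point_norm p (d x z powr p) (d y z powr p) (d x y powr p) x y)"
    using p distinct d_sym by (intro admissible_three_point_norm) auto
  then have "admissible p {z, x, y} d z (three_point_norm p \<alpha> \<alpha> (d x y powr p) x y)"
    by (simp only: weights)
  then have "three_point_norm p \<alpha> \<alpha> (d x y powr p) x y \<mu> \<le> Fp_norm p {z, x, y} d z \<mu>"
    unfolding \<mu>_def using p by (intro admissible_le_Fp_norm) auto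
  moreover have "(2 * \<alpha>) powr (1 / p) \<le> three_point_norm p \<alpha> \<alpha> (d x y powr p) x y \<mu>"
    using p weights \<mu>_xy by (intro three_point_norm_ge) (auto simp: \<alpha>_def)
  ultimately have lower: "(2 * \<alpha>) powr (1 / p) \<le> Fp_norm p {z, x, y} d z \<mu>"
    by linarith
  have "Fp_norm p {z, x, y, w} d z \<mu>
      \<le> (\<bar>1\<bar> powr p * d x w powr p + (\<bar>1\<bar> powr p * d y w powr p + (\<bar>2\<bar> powr p * d w z powr p + 0)))
          powr (1 / p)"
    unfolding \<mu>_via_w
    using Fp_norm_edge_combination_le[OF p(1) d_nonneg, of "[(1, x, w), (1, y, w), (2, w, z)]" z]
    by simp
  also have "\<dots> = (2 * E powr (p / q) + 2 powr p * (2 - E) powr (p / q)) powr (1 / p)"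
    using E by (simp add: d powr_powr)
  finally have upper: "Fp_norm p {z, x, y, w} d z \<mu>
      \<le> (2 * E powr (p / q) + 2 powr p * (2 - E) powr (p / q)) powr (1 / p)" .
  have "0 \<le> Fp_norm p {z, x, y, w} d z \<mu>"
    unfolding \<mu>_def using admissible_le_Fp_norm[OF p(1) admissible_zero[OF d_nonneg]] by simp
  then have "ereal ((2 * \<alpha>) powr (1 / p)
      / (2 * E powr (p / q) + 2 powr p * (2 - E) powr (p / q)) powr (1 / p))
      \<le> amen p {z, x, y} {z, x, y, w} d z"
    using \<mu>_mol \<mu>_xy lower upper by (intro ereal_divide_le_amen[where x = x]) (auto simp: \<alpha>_def)
  then show ?thesis
    using E by (simp add: d_def \<alpha>_def powr_divide)
qed

section \<open>Lower bounds for aa\<close>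

lemma rmetric_subset: "rmetric r M d \<Longrightarrow> N \<subseteq> M \<Longrightarrow> rmetric r N d"
  unfolding rmetric_def by blast

lemma aa_two_ge_kite:
  assumes p: "0 < p" "p \<le> 1" and q: "0 < q"
    and E: "0 < E" "E < 2" "2 - 2 powr p \<le> E powr (p / q)"
  shows "ereal ((2 * 2 powr (p / q) / (2 * E powr (p / q) + 2 powr p * (2 - E) powr (p / q)))
                  powr (1 / p))
           \<le> aa TYPE('a::infinite) p q 2"
proof -
  fix z :: 'a
  obtain x :: 'a where "x \<notin> {z}" using arb_element[of "{z}"] by blast
  obtain y :: 'a where "y \<notin> {z, x}" using arb_element[of "{z, x}"] by blast
  obtain w :: 'a where "w \<notin> {z, x, y}" using arb_element[of "{z, x, y}"] by blast
  then have distinct: "distinct [z, x, y, w]"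
    using \<open>x \<notin> {z}\<close> \<open>y \<notin> {z, x}\<close> by auto
  define d where "d = kite_metric q E z x y w"
  have "rmetric q {z, x, y, w} d"
    unfolding d_def using q E(1,2) distinct by (rule kite_metric_rmetric)
  moreover have "card ({z, x, y} - {z}) = 2"
    using distinct by auto
  ultimately have "amen p {z, x, y} {z, x, y, w} d z \<le> aa TYPE('a) p q 2"
    unfolding aa_def pointed_rmetric_def
    by (intro Sup_upper CollectI exI[of _ "{z, x, y}"] exI[of _ "{z, x, y, w}"] exI[of _ d] exI[of _ z])
      (auto intro: rmetric_subset)
  with amen_kite_ge[OF p q E distinct] show ?thesis
    by (simp add: d_def)
qed

lemma aa_two_ge:
  assumes p: "0 < p" "p < 1" and q: "0 < q"
  shows "ereal ((2 * 2 powr (p / q) /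
            (2 powr p * (2 - (2 - 2 powr p) powr (q / p)) powr (p / q) + 2 * (2 - 2 powr p)))
            powr (1 / p))
           \<le> aa TYPE('a::infinite) p q 2"
proof -
  define E where "E = (2 - 2 powr p) powr (q / p)"
  have "1 < 2 powr p" "2 powr p < 2"
    using p powr_less_mono[of p 1 "2::real"] by auto
  then have "0 < E" "E < 1" "E powr (p / q) = 2 - 2 powr p"
    using p q by (simp_all add: E_def powr_powr powr01_less_one)
  then show ?thesis
    using aa_two_ge_kite[of p q E] p q by (simp add: E_def add.commute)
qed

lemma aa_p_two_ge:
  assumes p: "0 < p" "p < 1"
  shows "ereal (4 / (4 + 2 powr p * (2 powr p - 2))) \<le> aa TYPE('a::infinite) p p 2"
proof -
  define \<beta> where "\<beta> = 4 / (4 + 2 powr p * (2 powr p - 2))"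
  have two_powr: "1 < 2 powr p" "2 powr p < 2"
    using p powr_less_mono[of p 1 "2::real"] by auto
  then have "2 powr p * (2 powr p - 2) \<le> 0"
    by (simp add: mult_pos_neg less_imp_le)
  moreover have "0 < 4 + 2 powr p * (2 powr p - 2)"
  proof -
    have "4 + 2 powr p * (2 powr p - 2) = (2 powr p - 1)\<^sup>2 + 3"
      by (simp add: power2_eq_square algebra_simps)
    then show ?thesis
      using zero_le_power2[of "2 powr p - 1"] by linarith
  qed
  ultimately have "1 \<le> \<beta>"
    unfolding \<beta>_def by (simp add: le_divide_eq)
  then have "\<beta> \<le> \<beta> powr (1 / p)"
    using p powr_mono[of 1 "1 / p" \<beta>] by simp
  also have "ereal (\<beta> powr (1 / p)) \<le> aa TYPE('a) p p 2"
    using aa_two_ge[where 'a = 'a, of p p] p two_powr by (simp add: \<beta>_def algebra_simps)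
  finally show ?thesis
    by (simp add: \<beta>_def)
qed

lemma aa_one_two_gt_one:
  assumes p: "0 < p" "p < 1"
    and gt: "2 powr (p + 1) / (4 + 2 powr p * ((2 - (2 - 2 powr p) powr (1 / p)) powr p - 2)) > 1"
  shows "aa TYPE('a::infinite) p 1 2 > 1"
proof -
  define \<beta> where "\<beta> = 2 powr (p + 1) / (4 + 2 powr p * ((2 - (2 - 2 powr p) powr (1 / p)) powr p - 2))"
  have "1 < \<beta> powr (1 / p)"
    using gt p by (simp add: \<beta>_def)
  also have "ereal (\<beta> powr (1 / p)) \<le> aa TYPE('a) p 1 2"
    using aa_two_ge[where 'a = 'a, of p 1] p by (simp add: \<beta>_def powr_add algebra_simps)
  finally show ?thesis
    by (simp add: one_ereal_def)
qed

lemma two_thirds_condition: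
  "2 powr (2/3 + 1) / (4 + 2 powr (2/3) * ((2 - (2 - 2 powr (2/3)) powr (1 / (2/3))) powr (2/3) - 2))
     > (1::real)"
proof -
  \<comment> \<open>With \<open>a = 2 powr (1/3)\<close> the claim becomes \<open>X < 4 - 2 * a\<close>, i.e. \<open>c\<^sup>2 < (4 - 2 * a) ^ 3\<close>,
    which two decimal places of \<open>a\<close> settle.\<close>
  define a :: real where "a = 2 powr (1/3)"
  have a_pos: "0 < a" by (simp add: a_def)
  have "a powr 3 = 2"
    by (simp add: a_def powr_powr)
  then have a_cube: "a ^ 3 = 2"
    using a_pos by (simp add: powr_realpow)
  have a_lo: "1 < a"
    by (rule power_less_imp_less_base[of _ 3]) (use a_cube a_pos in auto)
  have a_hi: "a < 1.26"
    by (rule power_less_imp_less_base[of _ 3]) (use a_cube in \<open>auto simp: power3_eq_cube\<close>)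
  have "2 powr (2/3) = a powr 2"
    by (simp add: a_def powr_powr)
  then have two_powr: "2 powr (2/3) = a\<^sup>2"
    using a_pos by (simp add: powr_realpow)
  then have two_powr_succ: "2 powr (2/3 + 1) = 2 * a\<^sup>2"
    unfolding powr_add by simp
  define b where "b = 2 - a\<^sup>2"
  have "a\<^sup>2 < 1.26\<^sup>2"
    by (rule power_strict_mono) (use a_hi a_pos in auto)
  then have a_sq: "1 < a\<^sup>2" "a\<^sup>2 < 1.6"
    using a_lo by (simp, simp add: power2_eq_square)
  then have b: "0.4 \<le> b" "b \<le> 1"
    by (simp_all add: b_def)
  have "0.5 \<le> sqrt b"
    by (rule real_le_rsqrt) (use b in \<open>simp add: power2_eq_square\<close>)
  moreover have "sqrt b \<le> 1"
    using b by simp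
  ultimately have bsqrtb: "0.2 \<le> b * sqrt b" "b * sqrt b \<le> 1"
    using b mult_mono[of "0.4" b "0.5" "sqrt b"] mult_mono[of b 1 "sqrt b" 1] by auto
  have "b powr (1 / (2/3)) = b powr (1 + 1/2)"
    by simp
  also have "\<dots> = b * sqrt b"
    using b by (subst powr_add) (simp add: powr_half_sqrt)
  finally have b_powr: "b powr (1 / (2/3)) = b * sqrt b" .
  define c where "c = 2 - b * sqrt b"
  define X where "X = c powr (2/3)"
  have "0 < c" "c \<le> 1.8"
    using bsqrtb by (simp_all add: c_def)
  moreover have "X powr 3 = c powr 2"
    by (simp add: X_def powr_powr)
  ultimately have "X ^ 3 \<le> 1.8 ^ 2"
    by (simp add: X_def powr_realpow power_mono)
  also have "(1.8::real) ^ 2 < 1.48 ^ 3" by (simp add: power2_eq_square power3_eq_cube)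
  also have "\<dots> \<le> (4 - 2 * a) ^ 3"
    using a_hi by (intro power_mono) auto
  finally have "X ^ 3 < (4 - 2 * a) ^ 3" .
  then have "X < 4 - 2 * a"
    by (rule power_less_imp_less_base) (use a_hi in auto)
  then have "a\<^sup>2 * X < a\<^sup>2 * (4 - 2 * a)"
    using a_pos by simp
  also have "\<dots> = 4 * a\<^sup>2 - 4"
    using a_cube by (simp add: algebra_simps power2_eq_square power3_eq_cube)
  finally have "4 + a\<^sup>2 * (X - 2) < 2 * a\<^sup>2"
    by (simp add: algebra_simps)
  moreover have "0 < 4 + a\<^sup>2 * (X - 2)"
  proof -
    have "4 + a\<^sup>2 * (X - 2) = 4 - 2 * a\<^sup>2 + a\<^sup>2 * X"
      by (simp add: algebra_simps)
    moreover have "a\<^sup>2 < 2" "0 \<le> a\<^sup>2 * X"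
      using a_sq by (simp_all add: X_def)
    ultimately show ?thesis by linarith
  qed
  ultimately have "1 < 2 * a\<^sup>2 / (4 + a\<^sup>2 * (X - 2))"
    by simp
  then show ?thesis
    unfolding two_powr_succ two_powr b_def[symmetric] b_powr c_def[symmetric] X_def[symmetric] .
qed

theorem proposition3p24:
  shows "(\<forall>p q. 0 < p \<and> p < 1 \<and> p \<le> q \<and> q \<le> 1 \<longrightarrow>
            aa TYPE('a::infinite) p q 2 \<ge>
              ereal ((2 * 2 powr (p / q) /
                 (2 powr p * (2 - (2 - 2 powr p) powr (q / p)) powr (p / q) + 2 * (2 - 2 powr p)))
                 powr (1 / p))) \<and>
         (\<forall>p. 0 < p \<and> p < 1 \<longrightarrow>
            aa TYPE('a) p p 2 \<ge> ereal (4 / (4 + 2 powr p * (2 powr p - 2)))) \<and>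
         (\<forall>p. 0 < p \<and> p < 1 \<and>
            2 powr (p + 1) / (4 + 2 powr p * ((2 - (2 - 2 powr p) powr (1 / p)) powr p - 2)) > 1
            \<longrightarrow> aa TYPE('a) p 1 2 > 1) \<and>
         (2 powr (2/3 + 1) /
            (4 + 2 powr (2/3) * ((2 - (2 - 2 powr (2/3)) powr (1 / (2/3))) powr (2/3) - 2)) > (1::real))"
  by (intro conjI allI impI aa_two_ge aa_p_two_ge aa_one_two_gt_one two_thirds_condition) auto

end
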